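(* Let $V^1$ and $V^2$ be vertex algebras with $V^1\subseteq V^2$ (i.e. $V^1$ is a vertex subalgebra of $V^2$, the inclusion being a homomorphism of vertex algebras). If $M$ is an $MZ_{0,-1}$-subspace of $V^2$, then $M\cap V^1$ is an $MZ_{0,-1}$-subspace of $V^1$.
   Context: Vertex algebras are over $\mathbb{C}$; for $u\in V$ write $Y(u,z)=\sum_{n\in\mathbb{Z}}u_nz^{-n-1}$ with $u_n\in\operatorname{End}V$. A homomorphism $f$ of vertex algebras is a linear map with $f(u_nv)=f(u)_nf(v)$ for all $u,v$, $n\in\mathbb{Z}$, and $f(\mathbf{1})=\mathbf{1}$. Iterated products are nested to the right: $v_{n_1}\cdots v_{n_t}v=v_{n_1}(\cdots(v_{n_t}v))$. For a subspace $M\subseteq V$: $r_{0,-1}(M)$ is the set of $v\in V$ for which there is $m\ge 0$ with $v_{n_1}\cdots v_{n_t}v\in M$ for all $t\ge m$ and all $n_1,\dots,n_t\in\{0,-1\}$. $lsr_{0,-1}(M)$ is the set of $v\in V$ such that for every $b\in V$ there is $m\ge0$ with $b_sv_{n_1}\cdots v_{n_t}v\in M$ for all $t\ge m$ and all $s,n_1,\dots,n_t\in\{0,-1\}$. $rsr_{0,-1}(M)$ is the set of $v\in V$ such that for every $w\in V$ there is $m\ge 0$ with $(v_{n_1}\cdots v_{n_t}v)_nw\in M$ for all $t\ge m$ and all $n,n_1,\dots,n_t\in\{0,-1\}$. $sr_{0,-1}(M)=lsr_{0,-1}(M)\cap rsr_{0,-1}(M)$. $M$ is an $MZ_{0,-1}$-subspace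 of $V$ if $r_{0,-1}(M)=sr_{0,-1}(M)$. *)

theory Defs
  imports Complex_Main
begin

text \<open>A vertex algebra over the complex numbers: the underlying complex vector space is the
  whole type 'v with scalar multiplication sc (required to satisfy vector_space sc);
  Y u n v denotes u_n v (the coefficient of z^(-n-1) in Y(u,z)v); vac is the vacuum.\<close>

text \<open>Borcherds identity (component form of the Jacobi identity); all sums are finite by
  truncation, which is expressed as: the partial sums agree for every large enough cut-off.\<close>
definition borcherds :: "(complex \<Rightarrow> 'v \<Rightarrow> 'v) \<Rightarrow> ('v::ab_group_add \<Rightarrow> int \<Rightarrow> 'v \<Rightarrow> 'v) \<Rightarrow> bool" where
  "borcherds sc Y \<longleftrightarrow> (\<forall>u v w l m n. \<exists>N. \<forall>K\<ge>N.
     (\<Sum>i\<le>K. sc ((of_int m :: complex) gchoose i) (Y (Y u (l + int i) v) (m + n - int i) w))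
   = (\<Sum>i\<le>K. sc ((-1) ^ i * ((of_int l :: complex) gchoose i))
        (Y u (l + m - int i) (Y v (n + int i) w)
         - sc ((-1::complex) powi l) (Y v (l + n - int i) (Y u (m + int i) w)))))"

definition vertex_algebra ::
  "(complex \<Rightarrow> 'v \<Rightarrow> 'v) \<Rightarrow> ('v::ab_group_add \<Rightarrow> int \<Rightarrow> 'v \<Rightarrow> 'v) \<Rightarrow> 'v \<Rightarrow> bool" where
  "vertex_algebra sc Y vac \<longleftrightarrow>
     vector_space sc \<and>
     (\<forall>n v. Vector_Spaces.linear sc sc (\<lambda>u. Y u n v)) \<and>
     (\<forall>u n. Vector_Spaces.linear sc sc (Y u n)) \<and>
     (\<forall>u v. \<exists>N. \<forall>n\<ge>N. Y u n v = 0) \<and>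
     (\<forall>n v. Y vac n v = (if n = -1 then v else 0)) \<and>
     (\<forall>u. Y u (-1) vac = u \<and> (\<forall>n\<ge>0. Y u n vac = 0)) \<and>
     borcherds sc Y"

definition va_hom ::
  "(complex \<Rightarrow> 'a \<Rightarrow> 'a) \<Rightarrow> ('a::ab_group_add \<Rightarrow> int \<Rightarrow> 'a \<Rightarrow> 'a) \<Rightarrow> 'a \<Rightarrow>
   (complex \<Rightarrow> 'b \<Rightarrow> 'b) \<Rightarrow> ('b::ab_group_add \<Rightarrow> int \<Rightarrow> 'b \<Rightarrow> 'b) \<Rightarrow> 'b \<Rightarrow> ('a \<Rightarrow> 'b) \<Rightarrow> bool" where
  "va_hom sc1 Y1 vac1 sc2 Y2 vac2 f \<longleftrightarrow> Vector_Spaces.linear sc1 sc2 f \<and> f vac1 = vac2 \<and>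
     (\<forall>u v n. f (Y1 u n v) = Y2 (f u) n (f v))"

definition iter_prod :: "('v \<Rightarrow> int \<Rightarrow> 'v \<Rightarrow> 'v) \<Rightarrow> 'v \<Rightarrow> int list \<Rightarrow> 'v" where
  "iter_prod Y v ns = foldr (\<lambda>n w. Y v n w) ns v"

definition r01 :: "('v \<Rightarrow> int \<Rightarrow> 'v \<Rightarrow> 'v) \<Rightarrow> 'v set \<Rightarrow> 'v set" where
  "r01 Y M = {v. \<exists>m::nat. \<forall>ns. length ns \<ge> m \<and> set ns \<subseteq> {0, -1} \<longrightarrow> iter_prod Y v ns \<in> M}"

definition lsr01 :: "('v \<Rightarrow> int \<Rightarrow> 'v \<Rightarrow> 'v) \<Rightarrow> 'v set \<Rightarrow> 'v set" where
  "lsr01 Y M = {v. \<forall>b. \<exists>m::nat. \<forall>s ns. s \<in> {0, -1} \<and> length ns \<ge> m \<and> set ns \<subseteq> {0, -1}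
      \<longrightarrow> Y b s (iter_prod Y v ns) \<in> M}"

definition rsr01 :: "('v \<Rightarrow> int \<Rightarrow> 'v \<Rightarrow> 'v) \<Rightarrow> 'v set \<Rightarrow> 'v set" where
  "rsr01 Y M = {v. \<forall>w. \<exists>m::nat. \<forall>n ns. n \<in> {0, -1} \<and> length ns \<ge> m \<and> set ns \<subseteq> {0, -1}
      \<longrightarrow> Y (iter_prod Y v ns) n w \<in> M}"

definition sr01 :: "('v \<Rightarrow> int \<Rightarrow> 'v \<Rightarrow> 'v) \<Rightarrow> 'v set \<Rightarrow> 'v set" where
  "sr01 Y M = lsr01 Y M \<inter> rsr01 Y M"

definition MZ01_subspace ::
  "(complex \<Rightarrow> 'v \<Rightarrow> 'v) \<Rightarrow> ('v::ab_group_add \<Rightarrow> int \<Rightarrow> 'v \<Rightarrow> 'v) \<Rightarrow> 'v set \<Rightarrow> bool" where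
  "MZ01_subspace sc Y M \<longleftrightarrow> module.subspace sc M \<and> r01 Y M = sr01 Y M"

end

theory Submission
  imports Defs
begin

text \<open>A vertex algebra homomorphism maps iterated products of v to iterated products of f v,
  so r_{0,-1} commutes with taking preimages and lsr_{0,-1}, rsr_{0,-1} can only grow under
  preimages, the test vectors b and w of the source being mapped to test vectors of the target.
  Conversely sr_{0,-1}(N) \<subseteq> r_{0,-1}(N) always holds, by taking the vacuum for b.
  Hence r(f\<inverse>M) = f\<inverse>r(M) = f\<inverse>sr(M) \<subseteq> sr(f\<inverse>M) \<subseteq> r(f\<inverse>M).\<close>

lemma iter_prod_hom:
  assumes "\<And>u v n. f (Y1 u n v) = Y2 (f u) n (f v)"
  shows "f (iter_prod Y1 v ns) = iter_prod Y2 (f v) ns"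
  by (induction ns) (simp_all add: iter_prod_def assms)

lemma r01_vimage:
  assumes "\<And>u v n. f (Y1 u n v) = Y2 (f u) n (f v)"
  shows "r01 Y1 (f -` M) = f -` r01 Y2 M"
  by (simp add: r01_def iter_prod_hom[of f Y1 Y2, OF assms])

lemma lsr01_vimage_subset:
  assumes "\<And>u v n. f (Y1 u n v) = Y2 (f u) n (f v)"
  shows "f -` lsr01 Y2 M \<subseteq> lsr01 Y1 (f -` M)"
  unfolding lsr01_def by (auto simp: assms iter_prod_hom[of f Y1 Y2, OF assms])

lemma rsr01_vimage_subset:
  assumes "\<And>u v n. f (Y1 u n v) = Y2 (f u) n (f v)"
  shows "f -` rsr01 Y2 M \<subseteq> rsr01 Y1 (f -` M)"
  unfolding rsr01_def by (auto simp: assms iter_prod_hom[of f Y1 Y2, OF assms])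

lemma sr01_vimage_subset:
  assumes "\<And>u v n. f (Y1 u n v) = Y2 (f u) n (f v)"
  shows "f -` sr01 Y2 M \<subseteq> sr01 Y1 (f -` M)"
  using lsr01_vimage_subset[of f Y1 Y2, OF assms] rsr01_vimage_subset[of f Y1 Y2, OF assms]
  unfolding sr01_def by blast

lemma lsr01_subset_r01:
  assumes "\<And>v. Y vac (-1) v = v"
  shows "lsr01 Y M \<subseteq> r01 Y M"
proof
  fix v assume "v \<in> lsr01 Y M"
  then obtain m where m: "\<forall>s ns. s \<in> {0, -1} \<and> length ns \<ge> m \<and> set ns \<subseteq> {0, -1}
      \<longrightarrow> Y vac s (iter_prod Y v ns) \<in> M"
    unfolding lsr01_def by blast
  have "iter_prod Y v ns \<in> M" if "length ns \<ge> m" "set ns \<subseteq> {0, -1}" for ns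
    using m[rule_format, of "-1" ns] that assms by simp
  then show "v \<in> r01 Y M"
    unfolding r01_def by blast
qed

lemma sr01_subset_r01:
  assumes "\<And>v. Y vac (-1) v = v"
  shows "sr01 Y M \<subseteq> r01 Y M"
  using lsr01_subset_r01[of Y, OF assms] by (auto simp: sr01_def)

theorem mainTheorem7:
  fixes sc1 :: "complex \<Rightarrow> 'a::ab_group_add \<Rightarrow> 'a" and Y1 :: "'a \<Rightarrow> int \<Rightarrow> 'a \<Rightarrow> 'a" and vac1 :: 'a
    and sc2 :: "complex \<Rightarrow> 'b::ab_group_add \<Rightarrow> 'b" and Y2 :: "'b \<Rightarrow> int \<Rightarrow> 'b \<Rightarrow> 'b" and vac2 :: 'b
    and f :: "'a \<Rightarrow> 'b" and M :: "'b set"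
  assumes "vertex_algebra sc1 Y1 vac1" and "vertex_algebra sc2 Y2 vac2"
    and "va_hom sc1 Y1 vac1 sc2 Y2 vac2 f" and "inj f"
    and "MZ01_subspace sc2 Y2 M"
  shows "MZ01_subspace sc1 Y1 (f -` M)"
proof -
  have lin: "Vector_Spaces.linear sc1 sc2 f" and hom: "\<And>u v n. f (Y1 u n v) = Y2 (f u) n (f v)"
    using assms(3) unfolding va_hom_def by auto
  have vac: "\<And>v. Y1 vac1 (-1) v = v"
    using assms(1) unfolding vertex_algebra_def by auto
  have M: "module.subspace sc2 M" "r01 Y2 M = sr01 Y2 M"
    using assms(5) unfolding MZ01_subspace_def by auto
  interpret Vector_Spaces.linear sc1 sc2 f
    by (rule lin)
  have "module.subspace sc1 (f -` M)"
    using subspace_vimage[OF M(1)] .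
  moreover have "r01 Y1 (f -` M) = sr01 Y1 (f -` M)"
  proof
    have "r01 Y1 (f -` M) = f -` sr01 Y2 M"
      using r01_vimage[of f Y1 Y2, OF hom] M(2) by simp
    then show "r01 Y1 (f -` M) \<subseteq> sr01 Y1 (f -` M)"
      using sr01_vimage_subset[of f Y1 Y2, OF hom] by simp
    show "sr01 Y1 (f -` M) \<subseteq> r01 Y1 (f -` M)"
      using sr01_subset_r01[of Y1, OF vac] .
  qed
  ultimately show ?thesis
    unfolding MZ01_subspace_def by simp
qed

end
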